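(* For all integers $n\geq 0$ and $i\geq 1$, $$\bar a_{3i+2}(3n+2)\equiv 0 \pmod 3.$$
   Context: For $|q|<1$ and integers $m\geq 1$, write $f_m:=\prod_{j\geq 1}(1-q^{jm})$. For an integer $c\geq 1$, the generalized overcubic partition function $\bar a_c(n)$ is defined by $$\sum_{n\geq 0}\bar a_c(n)q^n=\frac{f_4^{c-1}}{f_1^2f_2^{2c-3}}.$$ *)

theory Defs
  imports "HOL-Computational_Algebra.Formal_Power_Series"
begin

(* f_m = prod_{j>=1} (1 - q^(jm)) as a formal power series over the rationals.
   Its n-th coefficient equals that of the finite product over j = 1..n
   (factors with j > n do not affect coefficients of degree <= n when m >= 1). *)
definition euler_f :: "nat \<Rightarrow> rat fps" where
  "euler_f m = Abs_fps (\<lambda>n. fps_nth (\<Prod>j\<in>{1..n}. (1 - fps_X ^ (j * m))) n)"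

(* sum abar_c(n) q^n = f_4^(c-1) / (f_1^2 f_2^(2c-3))
   = f_4^(c-1) f_2^3 / (f_1^2 f_2^(2c))  (valid for every c >= 1) *)
definition overcubic_gf :: "nat \<Rightarrow> rat fps" where
  "overcubic_gf c = euler_f 4 ^ (c - 1) * euler_f 2 ^ 3
      * inverse (euler_f 1 ^ 2 * euler_f 2 ^ (2 * c))"

definition abar :: "nat \<Rightarrow> nat \<Rightarrow> rat" where
  "abar c n = fps_nth (overcubic_gf c) n"

end

theory Submission
  imports Defs
begin

(*
  Write f_m for euler_f m. For c = 3i + 2 the generating function factors as
    f_4^(3i+1) f_2^3 / (f_1^2 f_2^(6i+4)) = (f_1 f_4 / f_2) * f_4^(3i) / (f_1^3 f_2^(6i)).
  Since (1 - x)^3 = 1 - x^3 modulo 3, f_m^3 is congruent to f_(3m) modulo 3, so the second factor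
  is congruent to f_12^i / (f_3 f_6^(2i)), a power series in q^3. The first factor is
  psi(-q) = sum_(n >= 0) (-q)^(n(n+1)/2): this follows from f(-q) = f_2^3 / (f_1 f_4) and Jacobi's
  triple product, which we obtain as a limit of a finite identity for Gaussian binomials.
  Triangular numbers are never 2 modulo 3, so psi(-q) has no terms q^(3n+2), and neither has its
  product with a series in q^3. Infinite products are compared through finite truncations, which
  agree with them up to any prescribed order.
*)

unbundle fps_syntax

section \<open>Agreement of power series up to a given order\<close>

definition fps_eq_upto :: "nat \<Rightarrow> 'a fps \<Rightarrow> 'a fps \<Rightarrow> bool" where
  "fps_eq_upto M A B \<longleftrightarrow> (\<forall>k\<le>M. A $ k = B $ k)"

lemma fps_eq_upto_refl [simp]: "fps_eq_upto M A A"
  by (simp add: fps_eq_upto_def)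

lemma fps_eq_upto_sym: "fps_eq_upto M A B \<Longrightarrow> fps_eq_upto M B A"
  by (simp add: fps_eq_upto_def)

lemma fps_eq_upto_trans [trans]:
  "fps_eq_upto M A B \<Longrightarrow> fps_eq_upto M B C \<Longrightarrow> fps_eq_upto M A C"
  by (simp add: fps_eq_upto_def)

lemma fps_eq_uptoD: "fps_eq_upto M A B \<Longrightarrow> k \<le> M \<Longrightarrow> A $ k = B $ k"
  by (simp add: fps_eq_upto_def)

lemma fps_eq_upto_add:
  "fps_eq_upto M A B \<Longrightarrow> fps_eq_upto M C D \<Longrightarrow> fps_eq_upto M (A + C) (B + D)"
  by (simp add: fps_eq_upto_def)

lemma fps_eq_upto_diff:
  fixes A :: "'a::group_add fps"
  shows "fps_eq_upto M A B \<Longrightarrow> fps_eq_upto M C D \<Longrightarrow> fps_eq_upto M (A - C) (B - D)"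
  by (simp add: fps_eq_upto_def)

lemma fps_eq_upto_mult:
  fixes A :: "'a::semiring_0 fps"
  assumes "fps_eq_upto M A B" "fps_eq_upto M C D"
  shows "fps_eq_upto M (A * C) (B * D)"
  using assms by (auto simp: fps_eq_upto_def fps_mult_nth intro!: sum.cong)

lemma fps_eq_upto_power:
  fixes A :: "'a::semiring_1 fps"
  shows "fps_eq_upto M A B \<Longrightarrow> fps_eq_upto M (A ^ n) (B ^ n)"
  by (induction n) (auto intro: fps_eq_upto_mult)

lemma fps_eq_upto_sum:
  "(\<And>x. x \<in> S \<Longrightarrow> fps_eq_upto M (f x) (g x)) \<Longrightarrow> fps_eq_upto M (sum f S) (sum g S)"
  by (induction S rule: infinite_finite_induct) (auto intro: fps_eq_upto_add)

lemma fps_eq_upto_power_0: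
  fixes Y :: "'a::comm_ring_1 fps"
  assumes "Y $ 0 = 0" "M < j"
  shows "fps_eq_upto M (Y ^ j) 0"
  using startsby_zero_power_prefix[OF assms(1)] assms(2) by (simp add: fps_eq_upto_def)

lemma fps_eq_upto_cancel:
  fixes A :: "'a::field fps"
  assumes "fps_eq_upto M (A * P) (B * P)" "P $ 0 \<noteq> 0"
  shows "fps_eq_upto M A B"
proof -
  have "fps_eq_upto M (A * P * inverse P) (B * P * inverse P)"
    using assms(1) by (rule fps_eq_upto_mult) simp
  then show ?thesis
    using inverse_mult_eq_1'[OF assms(2)] by (simp add: mult.assoc)
qed

lemma fps_eq_upto_inverse:
  fixes A :: "'a::field fps"
  assumes "fps_eq_upto M A B" "A $ 0 \<noteq> 0"
  shows "fps_eq_upto M (inverse A) (inverse B)"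
proof -
  have B0: "B $ 0 \<noteq> 0"
    using assms by (simp add: fps_eq_upto_def)
  have "fps_eq_upto M (inverse A * B) (inverse A * A)"
    by (rule fps_eq_upto_mult[OF fps_eq_upto_refl fps_eq_upto_sym[OF assms(1)]])
  also have "inverse A * A = inverse B * B"
    using assms(2) B0 by (simp add: inverse_mult_eq_1)
  finally show ?thesis
    using B0 by (rule fps_eq_upto_cancel)
qed

lemma fps_eq_upto_prod_stable:
  fixes f :: "nat \<Rightarrow> 'a::comm_semiring_1 fps"
  assumes "\<And>j. M < j \<Longrightarrow> fps_eq_upto M (f j) 1" "M \<le> K"
  shows "fps_eq_upto M (\<Prod>j\<in>{1..K}. f j) (\<Prod>j\<in>{1..M}. f j)"
  using assms(2)
proof (induction K rule: dec_induct)
  case (step K)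
  have "fps_eq_upto M ((\<Prod>j\<in>{1..K}. f j) * f (Suc K)) ((\<Prod>j\<in>{1..M}. f j) * 1)"
    using step by (intro fps_eq_upto_mult assms(1)) auto
  then show ?case
    by (simp add: prod.nat_ivl_Suc')
qed simp

section \<open>Truncated Euler products\<close>

definition euler_prod :: "'a::comm_ring_1 \<Rightarrow> nat \<Rightarrow> nat \<Rightarrow> 'a" where
  "euler_prod Y m K = (\<Prod>j\<in>{1..K}. 1 - Y ^ (j * m))"

lemma euler_prod_0 [simp]: "euler_prod Y m 0 = 1"
  by (simp add: euler_prod_def)

lemma euler_prod_Suc: "euler_prod Y m (Suc K) = euler_prod Y m K * (1 - Y ^ (Suc K * m))"
  by (simp add: euler_prod_def prod.nat_ivl_Suc')

lemma fps_prod_nth_0: "(\<Prod>x\<in>S. f x) $ 0 = (\<Prod>x\<in>S. f x $ 0)"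
  by (induction S rule: infinite_finite_induct) auto

lemma euler_prod_nth_0:
  fixes Y :: "'a::comm_ring_1 fps"
  assumes "Y $ 0 = 0" "1 \<le> m"
  shows "euler_prod Y m K $ 0 = 1"
  using assms unfolding euler_prod_def fps_prod_nth_0
  by (intro prod.neutral) (auto simp: fps_power_zeroth zero_power)

lemma euler_prod_eq_upto:
  fixes Y :: "'a::comm_ring_1 fps"
  assumes "Y $ 0 = 0" "1 \<le> m" "M \<le> K"
  shows "fps_eq_upto M (euler_prod Y m K) (euler_prod Y m M)"
  unfolding euler_prod_def
proof (rule fps_eq_upto_prod_stable[OF _ assms(3)])
  fix j assume "M < j"
  then have "M < j * m"
    using assms(2) by (metis less_le_trans mult_le_mono2 nat_mult_1_right)
  then have "fps_eq_upto M (1 - Y ^ (j * m)) (1 - 0)"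
    by (intro fps_eq_upto_diff fps_eq_upto_refl fps_eq_upto_power_0 assms(1))
  then show "fps_eq_upto M (1 - Y ^ (j * m)) 1"
    by simp
qed

lemma euler_f_eq_upto:
  assumes "1 \<le> m"
  shows "fps_eq_upto M (euler_f m) (euler_prod fps_X m M)"
  unfolding fps_eq_upto_def
proof (intro allI impI)
  fix k assume "k \<le> M"
  then have "euler_prod (fps_X :: rat fps) m M $ k = euler_prod fps_X m k $ k"
    using assms by (intro fps_eq_uptoD[OF euler_prod_eq_upto[of fps_X m k M]]) simp_all
  then show "euler_f m $ k = euler_prod fps_X m M $ k"
    by (simp add: euler_f_def euler_prod_def)
qed

lemma euler_f_nth_0 [simp]: "euler_f m $ 0 = 1"
  by (simp add: euler_f_def)

section \<open>Power series with integer coefficients modulo an integer\<close>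

definition int_multiple :: "int \<Rightarrow> 'a::ring_1 \<Rightarrow> bool" where
  "int_multiple p x \<longleftrightarrow> (\<exists>z. x = of_int (p * z))"

lemma int_multiple_0 [simp]: "int_multiple p 0"
  by (auto simp: int_multiple_def intro: exI[of _ 0])

lemma int_multiple_add: "int_multiple p x \<Longrightarrow> int_multiple p y \<Longrightarrow> int_multiple p (x + y)"
  unfolding int_multiple_def by (metis distrib_left of_int_add)

lemma int_multiple_minus: "int_multiple p x \<Longrightarrow> int_multiple p (- x)"
  unfolding int_multiple_def by (metis mult_minus_right of_int_minus)

lemma int_multiple_mult_Ints: "int_multiple p x \<Longrightarrow> y \<in> \<int> \<Longrightarrow> int_multiple p (x * y)"
  unfolding int_multiple_def by (metis Ints_cases mult.assoc of_int_mult)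

lemma int_multiple_sum: "(\<And>x. x \<in> S \<Longrightarrow> int_multiple p (f x)) \<Longrightarrow> int_multiple p (sum f S)"
  by (induction S rule: infinite_finite_induct) (auto intro: int_multiple_add)

definition int_coeffs :: "'a::ring_1 fps \<Rightarrow> bool" where
  "int_coeffs A \<longleftrightarrow> (\<forall>k. A $ k \<in> \<int>)"

definition fps_cong :: "int \<Rightarrow> 'a::ring_1 fps \<Rightarrow> 'a fps \<Rightarrow> bool" where
  "fps_cong p A B \<longleftrightarrow> (\<forall>k. int_multiple p (A $ k - B $ k))"

lemma int_coeffs_1 [simp]: "int_coeffs 1"
  by (simp add: int_coeffs_def fps_one_nth)

lemma int_coeffs_X [simp]: "int_coeffs fps_X"
  by (simp add: int_coeffs_def fps_X_nth)

lemma int_coeffs_diff: "int_coeffs A \<Longrightarrow> int_coeffs B \<Longrightarrow> int_coeffs (A - B)"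
  by (simp add: int_coeffs_def)

lemma int_coeffs_mult: "int_coeffs A \<Longrightarrow> int_coeffs B \<Longrightarrow> int_coeffs (A * B)"
  unfolding int_coeffs_def fps_mult_nth by (auto intro!: Ints_sum Ints_mult)

lemma int_coeffs_power: "int_coeffs A \<Longrightarrow> int_coeffs (A ^ n)"
  by (induction n) (auto intro: int_coeffs_mult)

lemma int_coeffs_prod:
  "(\<And>x. x \<in> S \<Longrightarrow> int_coeffs (f x)) \<Longrightarrow> int_coeffs (\<Prod>x\<in>S. f x)"
  by (induction S rule: infinite_finite_induct) (auto intro: int_coeffs_mult)

lemma int_coeffs_euler_prod: "int_coeffs Y \<Longrightarrow> int_coeffs (euler_prod Y m K)"
  unfolding euler_prod_def by (intro int_coeffs_prod int_coeffs_diff int_coeffs_1 int_coeffs_power)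

lemma int_coeffs_euler_f: "int_coeffs (euler_f m)"
proof -
  have "int_coeffs (euler_prod (fps_X :: rat fps) m k)" for k
    by (rule int_coeffs_euler_prod[OF int_coeffs_X])
  then show ?thesis
    by (simp add: int_coeffs_def euler_f_def euler_prod_def)
qed

lemma fps_inverse_nth_rec:
  fixes D :: "'a::field fps"
  assumes "D $ 0 = 1"
  shows "inverse D $ n = 1 $ n - (\<Sum>i<n. inverse D $ i * D $ (n - i))"
proof -
  have "1 $ n = (inverse D * D) $ n"
    using assms by (simp add: inverse_mult_eq_1)
  also have "\<dots> = (\<Sum>i<n. inverse D $ i * D $ (n - i)) + inverse D $ n"
    using assms by (simp add: fps_mult_nth atLeast0AtMost lessThan_Suc_atMost[symmetric])
  finally show ?thesis
    by simp
qed

lemma int_coeffs_inverse: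
  fixes D :: "'a::field fps"
  assumes "int_coeffs D" "D $ 0 = 1"
  shows "int_coeffs (inverse D)"
proof -
  have "inverse D $ n \<in> \<int>" for n
  proof (induction n rule: less_induct)
    case (less n)
    then show ?case
      using assms unfolding fps_inverse_nth_rec[OF assms(2), of n] int_coeffs_def
      by (auto simp: fps_one_nth intro!: Ints_diff Ints_sum Ints_mult)
  qed
  then show ?thesis
    by (simp add: int_coeffs_def)
qed

lemma fps_cong_refl [simp]: "fps_cong p A A"
  by (simp add: fps_cong_def)

lemma fps_cong_sym: "fps_cong p A B \<Longrightarrow> fps_cong p B A"
  unfolding fps_cong_def by (metis int_multiple_minus minus_diff_eq)

lemma fps_cong_trans [trans]: "fps_cong p A B \<Longrightarrow> fps_cong p B C \<Longrightarrow> fps_cong p A C"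
  unfolding fps_cong_def by (metis diff_add_cancel add_diff_eq int_multiple_add)

lemma fps_cong_mult_integral:
  fixes A :: "'a::comm_ring_1 fps"
  assumes "fps_cong p A B" "int_coeffs C"
  shows "fps_cong p (A * C) (B * C)" "fps_cong p (C * A) (C * B)"
proof -
  have "int_multiple p (((A - B) * C) $ k)" for k
    using assms unfolding fps_cong_def int_coeffs_def fps_mult_nth
    by (auto intro!: int_multiple_sum int_multiple_mult_Ints)
  moreover have "(A * C) $ k - (B * C) $ k = ((A - B) * C) $ k"
    and "(C * A) $ k - (C * B) $ k = ((A - B) * C) $ k" for k
    by (simp_all add: algebra_simps)
  ultimately show "fps_cong p (A * C) (B * C)" "fps_cong p (C * A) (C * B)"
    by (simp_all add: fps_cong_def)
qed

lemma fps_cong_mult: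
  fixes A :: "'a::comm_ring_1 fps"
  assumes "fps_cong p A A'" "fps_cong p B B'" "int_coeffs A'" "int_coeffs B"
  shows "fps_cong p (A * B) (A' * B')"
  using fps_cong_mult_integral(1)[OF assms(1,4)] fps_cong_mult_integral(2)[OF assms(2,3)]
  by (rule fps_cong_trans)

lemma fps_cong_power:
  fixes A :: "'a::comm_ring_1 fps"
  assumes "fps_cong p A B" "int_coeffs A" "int_coeffs B"
  shows "fps_cong p (A ^ n) (B ^ n)"
proof (induction n)
  case (Suc n)
  show ?case
    using fps_cong_mult[OF assms(1) Suc assms(3) int_coeffs_power[OF assms(2)]] by simp
qed simp

lemma fps_cong_prod:
  fixes f :: "'b \<Rightarrow> 'a::comm_ring_1 fps"
  assumes "\<And>x. x \<in> S \<Longrightarrow> fps_cong p (f x) (g x)" "\<And>x. x \<in> S \<Longrightarrow> int_coeffs (f x)"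
    "\<And>x. x \<in> S \<Longrightarrow> int_coeffs (g x)"
  shows "fps_cong p (\<Prod>x\<in>S. f x) (\<Prod>x\<in>S. g x)"
  using assms
proof (induction S rule: infinite_finite_induct)
  case (insert x S)
  have "fps_cong p (f x * (\<Prod>x\<in>S. f x)) (g x * (\<Prod>x\<in>S. g x))"
    using insert by (intro fps_cong_mult int_coeffs_prod) auto
  then show ?case
    using insert by simp
qed simp_all

lemma fps_cong_inverse:
  fixes A :: "'a::field fps"
  assumes "fps_cong p A B" "int_coeffs A" "int_coeffs B" "A $ 0 = 1" "B $ 0 = 1"
  shows "fps_cong p (inverse A) (inverse B)"
proof -
  have "inverse A * inverse B * B - inverse A * inverse B * A
          = inverse A * (inverse B * B) - inverse B * (inverse A * A)"
    by (simp add: algebra_simps)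
  then have "inverse A - inverse B = inverse A * inverse B * B - inverse A * inverse B * A"
    using assms(4,5) by (simp add: inverse_mult_eq_1)
  moreover have "fps_cong p (inverse A * inverse B * B) (inverse A * inverse B * A)"
    using assms fps_cong_mult_integral(2)[OF fps_cong_sym[OF assms(1)]]
    by (simp add: int_coeffs_mult int_coeffs_inverse)
  ultimately show ?thesis
    unfolding fps_cong_def by (metis fps_sub_nth)
qed

lemma fps_cong_cube:
  fixes A :: "'a::comm_ring_1 fps"
  assumes "int_coeffs A"
  shows "fps_cong 3 ((1 - A) ^ 3) (1 - A ^ 3)"
  unfolding fps_cong_def int_multiple_def
proof
  fix k
  have "(1 - A) ^ 3 - (1 - A ^ 3) = 3 * (A * A - A)"
    by (simp add: algebra_simps power3_eq_cube)
  then have diff: "(1 - A) ^ 3 $ k - (1 - A ^ 3) $ k = 3 * (A * A - A) $ k"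
    by (metis fps_sub_nth fps_mult_left_const_nth fps_numeral_fps_const)
  have "(A * A - A) $ k \<in> \<int>"
    using int_coeffs_diff[OF int_coeffs_mult[OF assms assms] assms]
    by (simp add: int_coeffs_def)
  then obtain z where "(A * A - A) $ k = of_int z"
    by (elim Ints_cases)
  with diff show "\<exists>z. (1 - A) ^ 3 $ k - (1 - A ^ 3) $ k = of_int (3 * z)"
    by (intro exI[of _ z]) (simp del: fps_sub_nth)
qed

lemma euler_prod_cube_cong:
  assumes "int_coeffs Y"
  shows "fps_cong 3 (euler_prod Y m K ^ 3) (euler_prod Y (3 * m) K)"
proof -
  have "euler_prod Y m K ^ 3 = (\<Prod>j\<in>{1..K}. (1 - Y ^ (j * m)) ^ 3)"
    unfolding euler_prod_def by (simp add: prod_power_distrib)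
  also have "fps_cong 3 \<dots> (\<Prod>j\<in>{1..K}. 1 - (Y ^ (j * m)) ^ 3)"
    using assms by (intro fps_cong_prod fps_cong_cube int_coeffs_power int_coeffs_diff) auto
  also have "(\<Prod>j\<in>{1..K}. 1 - (Y ^ (j * m)) ^ 3) = euler_prod Y (3 * m) K"
    unfolding euler_prod_def by (simp add: power_mult[symmetric] ac_simps)
  finally show ?thesis .
qed

lemma euler_f_cube_cong:
  assumes "1 \<le> m"
  shows "fps_cong 3 (euler_f m ^ 3) (euler_f (3 * m))"
  unfolding fps_cong_def
proof
  fix k
  have "fps_eq_upto k (euler_f m ^ 3 - euler_f (3 * m))
          (euler_prod fps_X m k ^ 3 - euler_prod fps_X (3 * m) k)"
    using assms by (intro fps_eq_upto_diff fps_eq_upto_power euler_f_eq_upto) simp_all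
  moreover have "fps_cong 3 (euler_prod (fps_X :: rat fps) m k ^ 3) (euler_prod fps_X (3 * m) k)"
    by (rule euler_prod_cube_cong[OF int_coeffs_X])
  ultimately show "int_multiple 3 (euler_f m ^ 3 $ k - euler_f (3 * m) $ k)"
    by (simp add: fps_eq_upto_def fps_cong_def)
qed

section \<open>Power series supported on multiples of \<open>d\<close>\<close>

definition fps_support_dvd :: "nat \<Rightarrow> 'a::zero fps \<Rightarrow> bool" where
  "fps_support_dvd d A \<longleftrightarrow> (\<forall>k. \<not> d dvd k \<longrightarrow> A $ k = 0)"

lemma fps_support_dvd_1 [simp]: "fps_support_dvd d 1"
  by (simp add: fps_support_dvd_def fps_one_nth)

lemma not_dvd_or_not_dvd_diff:
  fixes i k d :: nat
  assumes "\<not> d dvd k" "i \<le> k"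
  shows "\<not> d dvd i \<or> \<not> d dvd (k - i)"
  using dvd_add[of d i "k - i"] assms by auto

lemma fps_support_dvd_mult:
  fixes A :: "'a::semiring_0 fps"
  assumes "fps_support_dvd d A" "fps_support_dvd d B"
  shows "fps_support_dvd d (A * B)"
  unfolding fps_support_dvd_def fps_mult_nth
proof (intro allI impI sum.neutral ballI)
  fix k i assume "\<not> d dvd k" "i \<in> {0..k}"
  then have "\<not> d dvd i \<or> \<not> d dvd (k - i)"
    by (intro not_dvd_or_not_dvd_diff) auto
  then show "A $ i * B $ (k - i) = 0"
    using assms unfolding fps_support_dvd_def by auto
qed

lemma fps_support_dvd_power:
  fixes A :: "'a::semiring_1 fps"
  assumes "fps_support_dvd d A"
  shows "fps_support_dvd d (A ^ n)"
  by (induction n) (simp_all add: fps_support_dvd_mult[OF assms])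

lemma fps_support_dvd_prod:
  fixes f :: "'b \<Rightarrow> 'a::comm_semiring_1 fps"
  shows "(\<And>x. x \<in> S \<Longrightarrow> fps_support_dvd d (f x)) \<Longrightarrow> fps_support_dvd d (\<Prod>x\<in>S. f x)"
  by (induction S rule: infinite_finite_induct) (simp_all add: fps_support_dvd_mult)

lemma fps_support_dvd_inverse:
  fixes D :: "'a::field fps"
  assumes "fps_support_dvd d D" "D $ 0 = 1"
  shows "fps_support_dvd d (inverse D)"
proof -
  have "\<not> d dvd n \<longrightarrow> inverse D $ n = 0" for n
  proof (induction n rule: less_induct)
    case (less n)
    show ?case
    proof
      assume n: "\<not> d dvd n"
      have "inverse D $ i * D $ (n - i) = 0" if "i < n" for i
        using not_dvd_or_not_dvd_diff[OF n, of i] that less assms(1)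
        unfolding fps_support_dvd_def by auto
      then have "(\<Sum>i<n. inverse D $ i * D $ (n - i)) = 0"
        by (intro sum.neutral) auto
      moreover have "n \<noteq> 0"
        using n by (metis dvd_0_right)
      ultimately show "inverse D $ n = 0"
        unfolding fps_inverse_nth_rec[OF assms(2), of n] by (simp add: fps_one_nth)
    qed
  qed
  then show ?thesis
    by (simp add: fps_support_dvd_def)
qed

lemma fps_support_dvd_euler_f: "fps_support_dvd d (euler_f (d * m))"
proof -
  have "fps_support_dvd d (euler_prod (fps_X :: rat fps) (d * m) K)" for K
    unfolding euler_prod_def
    by (intro fps_support_dvd_prod) (auto simp: fps_support_dvd_def fps_one_nth)
  then show ?thesis
    by (simp add: fps_support_dvd_def euler_f_def euler_prod_def)
qed

lemma fps_mult_nth_eq_0_mod: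
  fixes W :: "'a::semiring_0 fps"
  assumes "\<And>i. i mod d = r \<Longrightarrow> W $ i = 0" "fps_support_dvd d H" "k mod d = r"
  shows "(W * H) $ k = 0"
  unfolding fps_mult_nth
proof (intro sum.neutral ballI)
  fix i assume "i \<in> {0..k}"
  have "i mod d = r" if "d dvd (k - i)"
  proof -
    from that obtain c where "k - i = d * c"
      by (elim dvdE)
    with \<open>i \<in> {0..k}\<close> have "k = i + d * c"
      by simp
    with assms(3) show ?thesis
      by simp
  qed
  then show "W $ i * H $ (k - i) = 0"
    using assms(1,2) unfolding fps_support_dvd_def by fastforce
qed

section \<open>Gaussian binomials and the finite Jacobi triple product\<close>

fun gauss_binom :: "'a::comm_ring_1 \<Rightarrow> nat \<Rightarrow> nat \<Rightarrow> 'a" where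
  "gauss_binom Y 0 m = (if m = 0 then 1 else 0)"
| "gauss_binom Y (Suc N) m = Y ^ m * gauss_binom Y N m + (if m = 0 then 0 else gauss_binom Y N (m - 1))"

lemma gauss_binom_eq_0: "N < m \<Longrightarrow> gauss_binom Y N m = 0"
  by (induction N arbitrary: m) auto

lemma gauss_binom_0_right [simp]: "gauss_binom Y N 0 = 1"
  by (induction N) auto

lemma gauss_binom_Suc_Suc':
  "gauss_binom Y (Suc N) (Suc m) = gauss_binom Y N (Suc m) + Y ^ (N - m) * gauss_binom Y N m"
proof (induction N arbitrary: m)
  case (Suc N)
  show ?case
  proof (cases m)
    case 0
    then show ?thesis
      using Suc.IH[of 0] by (simp add: algebra_simps)
  next
    case (Suc m')
    have "gauss_binom Y (Suc (Suc N)) (Suc m)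
        = Y ^ Suc m * (gauss_binom Y N (Suc m) + Y ^ (N - m) * gauss_binom Y N m)
          + (gauss_binom Y N (Suc m') + Y ^ (N - m') * gauss_binom Y N m')"
      using Suc.IH[of m] Suc.IH[of m'] Suc by simp
    also have "\<dots> = (Y ^ Suc m * gauss_binom Y N (Suc m) + gauss_binom Y N m)
                   + Y ^ (Suc N - m) * (Y ^ m * gauss_binom Y N m + gauss_binom Y N m')"
    proof (cases "m \<le> N")
      case True
      then have "Y ^ Suc m * Y ^ (N - m) = Y ^ (Suc N - m) * Y ^ m"
        by (simp flip: power_add add: Suc_diff_le)
      then show ?thesis
        using Suc by (simp add: algebra_simps)
    next
      case False
      then show ?thesis
        using Suc by (simp add: gauss_binom_eq_0 algebra_simps)
    qed
    also have "\<dots> = gauss_binom Y (Suc N) (Suc m) + Y ^ (Suc N - m) * gauss_binom Y (Suc N) m"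
      using Suc by simp
    finally show ?thesis .
  qed
qed simp

lemma gauss_binom_mult_euler_prod:
  "m \<le> N \<Longrightarrow> gauss_binom Y N m * euler_prod Y 1 m * euler_prod Y 1 (N - m) = euler_prod Y 1 N"
proof (induction N arbitrary: m)
  case (Suc N)
  define P where "P = euler_prod Y 1"
  show ?case
  proof (cases m)
    case (Suc m')
    show ?thesis
    proof (cases "m' = N")
      case True
      then show ?thesis
        using Suc.IH[of m'] Suc by (simp add: gauss_binom_eq_0 euler_prod_Suc algebra_simps)
    next
      case False
      with Suc Suc.prems have lt: "Suc m' \<le> N"
        by simp
      have IH1: "gauss_binom Y N (Suc m') * P (Suc m') * P (N - Suc m') = P N"
        using Suc.IH[of "Suc m'"] lt by (simp add: P_def)
      have IH2: "gauss_binom Y N m' * P m' * P (N - m') = P N"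
        using Suc.IH[of m'] lt by (simp add: P_def)
      have split: "P (N - m') = P (N - Suc m') * (1 - Y ^ (N - m'))"
        using euler_prod_Suc[of Y 1 "N - Suc m'"] lt by (simp add: P_def Suc_diff_Suc)
      have "Suc m' + (N - m') = Suc N"
        using lt by simp
      then have pow: "Y ^ Suc m' * Y ^ (N - m') = Y ^ Suc N"
        by (metis power_add)
      have "gauss_binom Y (Suc N) m * P m * P (Suc N - m)
          = (Y ^ Suc m' * gauss_binom Y N (Suc m') + gauss_binom Y N m') * P (Suc m') * P (N - m')"
        using Suc by simp
      also have "\<dots> = Y ^ Suc m' * (1 - Y ^ (N - m'))
                        * (gauss_binom Y N (Suc m') * P (Suc m') * P (N - Suc m'))
                      + (1 - Y ^ Suc m') * (gauss_binom Y N m' * P m' * P (N - m'))"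
        unfolding split by (simp add: P_def euler_prod_Suc algebra_simps)
      also have "\<dots> = P N * (1 - Y ^ Suc m' * Y ^ (N - m'))"
        unfolding IH1 IH2 by (simp add: algebra_simps)
      also have "\<dots> = P (Suc N)"
        unfolding pow by (simp add: P_def euler_prod_Suc)
      finally show ?thesis
        by (simp add: P_def)
    qed
  qed simp
qed simp

(* x(x - 1)/2 is a nonnegative integer for every integer x, so nat loses nothing. *)
definition choose2 :: "int \<Rightarrow> nat" where
  "choose2 x = nat (x * (x - 1) div 2)"

lemma of_nat_choose2: "2 * int (choose2 x) = x * (x - 1)"
proof -
  have "even (x * (x - 1))"
    by auto
  moreover have "0 \<le> x * (x - 1)"
    by (cases "x \<ge> 1") (auto intro: mult_nonneg_nonneg mult_nonpos_nonpos)
  ultimately show ?thesis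
    unfolding choose2_def by auto
qed

lemma choose2_shift_left: "m + choose2 (int m - int (Suc a)) = Suc a + choose2 (int m - int a)"
  using of_nat_choose2[of "int m - int (Suc a)"] of_nat_choose2[of "int m - int a"]
  by (simp add: algebra_simps)

lemma choose2_shift_right:
  "m \<le> a + b \<Longrightarrow> (a + b - m) + choose2 (int (Suc m) - int a) = b + choose2 (int m - int a)"
  using of_nat_choose2[of "int (Suc m) - int a"] of_nat_choose2[of "int m - int a"]
  by (simp add: algebra_simps of_nat_diff)

definition jacobi_sum :: "'a::comm_ring_1 \<Rightarrow> nat \<Rightarrow> nat \<Rightarrow> 'a" where
  "jacobi_sum Y a b = (\<Sum>m=0..a+b. gauss_binom Y (a + b) m * Y ^ choose2 (int m - int a))"

lemma jacobi_sum_Suc_left: "jacobi_sum Y (Suc a) b = (1 + Y ^ Suc a) * jacobi_sum Y a b"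
proof -
  define N where "N = a + b"
  define T where "T = (\<lambda>m. Y ^ choose2 (int m - int (Suc a)))"
  define S where "S = jacobi_sum Y a b"
  have "jacobi_sum Y (Suc a) b = (\<Sum>m=0..Suc N. gauss_binom Y (Suc N) m * T m)"
    by (simp add: jacobi_sum_def N_def T_def del: gauss_binom.simps)
  also have "\<dots> = (\<Sum>m=0..Suc N. Y ^ m * gauss_binom Y N m * T m)
        + (\<Sum>m=0..Suc N. (if m = 0 then 0 else gauss_binom Y N (m - 1)) * T m)"
    by (simp only: gauss_binom.simps distrib_right sum.distrib)
  also have "(\<Sum>m=0..Suc N. Y ^ m * gauss_binom Y N m * T m) = Y ^ Suc a * S"
  proof -
    have shift: "Y ^ m * T m = Y ^ Suc a * Y ^ choose2 (int m - int a)" for m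
      using choose2_shift_left[of m a] unfolding T_def by (metis power_add)
    have "(\<Sum>m=0..Suc N. Y ^ m * gauss_binom Y N m * T m)
        = (\<Sum>m=0..N. Y ^ m * gauss_binom Y N m * T m)"
      by (simp add: gauss_binom_eq_0 del: gauss_binom.simps)
    also have "\<dots> = (\<Sum>m=0..N. Y ^ Suc a * (gauss_binom Y N m * Y ^ choose2 (int m - int a)))"
      by (rule sum.cong[OF refl]) (metis shift mult.left_commute mult.assoc)
    finally show ?thesis
      by (simp add: S_def jacobi_sum_def N_def sum_distrib_left del: gauss_binom.simps)
  qed
  also have "(\<Sum>m=0..Suc N. (if m = 0 then 0 else gauss_binom Y N (m - 1)) * T m) = S"
    unfolding S_def jacobi_sum_def N_def T_def
    by (subst sum.atLeast0_atMost_Suc_shift) (simp del: gauss_binom.simps)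
  finally show ?thesis
    by (simp add: S_def distrib_right)
qed

lemma jacobi_sum_Suc_right: "jacobi_sum Y a (Suc b) = (1 + Y ^ b) * jacobi_sum Y a b"
proof -
  define N where "N = a + b"
  define T where "T = (\<lambda>m. Y ^ choose2 (int m - int a))"
  define S where "S = jacobi_sum Y a b"
  have S_eq: "S = (\<Sum>m=0..N. gauss_binom Y N m * T m)"
    by (simp add: S_def jacobi_sum_def N_def T_def)
  have "jacobi_sum Y a (Suc b) = (\<Sum>m=0..Suc N. gauss_binom Y (Suc N) m * T m)"
    by (simp add: jacobi_sum_def N_def T_def del: gauss_binom.simps)
  also have "\<dots> = T 0 + (\<Sum>m=0..N. gauss_binom Y (Suc N) (Suc m) * T (Suc m))"
    by (subst sum.atLeast0_atMost_Suc_shift) (simp del: gauss_binom.simps)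
  also have "\<dots> = (T 0 + (\<Sum>m=0..N. gauss_binom Y N (Suc m) * T (Suc m)))
                  + (\<Sum>m=0..N. Y ^ (N - m) * gauss_binom Y N m * T (Suc m))"
    by (simp only: gauss_binom_Suc_Suc' distrib_right sum.distrib add.assoc)
  also have "T 0 + (\<Sum>m=0..N. gauss_binom Y N (Suc m) * T (Suc m)) = S"
  proof -
    have "T 0 + (\<Sum>m=0..N. gauss_binom Y N (Suc m) * T (Suc m))
        = (\<Sum>m=0..Suc N. gauss_binom Y N m * T m)"
      by (subst sum.atLeast0_atMost_Suc_shift) (simp del: gauss_binom.simps)
    then show ?thesis
      by (simp add: gauss_binom_eq_0 S_eq del: gauss_binom.simps)
  qed
  also have "(\<Sum>m=0..N. Y ^ (N - m) * gauss_binom Y N m * T (Suc m)) = Y ^ b * S"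
    unfolding S_eq sum_distrib_left
  proof (rule sum.cong[OF refl])
    fix m assume "m \<in> {0..N}"
    then have "Y ^ (N - m) * T (Suc m) = Y ^ b * T m"
      using choose2_shift_right[of m a b] by (simp add: N_def T_def flip: power_add)
    then show "Y ^ (N - m) * gauss_binom Y N m * T (Suc m) = Y ^ b * (gauss_binom Y N m * T m)"
      by (metis mult.assoc mult.commute)
  qed
  finally show ?thesis
    by (simp add: S_def distrib_right)
qed

(* The exponents choose2 (m - a) are the numbers x(x - 1)/2 with -a <= x <= b. *)
lemma finite_jacobi_triple_product:
  "(\<Prod>j\<in>{1..a}. 1 + Y ^ j) * (\<Prod>j<b. 1 + Y ^ j) = jacobi_sum Y a b"
proof (induction b)
  case 0
  show ?case
  proof (induction a)
    case 0
    then show ?case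
      by (simp add: jacobi_sum_def choose2_def)
  next
    case (Suc a)
    then show ?case
      by (simp add: jacobi_sum_Suc_left prod.nat_ivl_Suc' algebra_simps)
  qed
next
  case (Suc b)
  then show ?case
    by (simp add: jacobi_sum_Suc_right algebra_simps)
qed

section \<open>Jacobi's triple product as a limit\<close>

lemma gauss_binom_eq_upto_1:
  fixes Y :: "'a::field fps"
  assumes "Y $ 0 = 0" "m \<le> N" "M \<le> m" "M \<le> N - m"
  shows "fps_eq_upto M (gauss_binom Y N m * euler_prod Y 1 M) 1"
proof -
  define P where "P = euler_prod Y 1 M"
  have "fps_eq_upto M (gauss_binom Y N m * P * P)
          (gauss_binom Y N m * euler_prod Y 1 m * euler_prod Y 1 (N - m))"
    unfolding P_def using assms
    by (intro fps_eq_upto_mult fps_eq_upto_refl fps_eq_upto_sym[OF euler_prod_eq_upto]) auto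
  also have "\<dots> = euler_prod Y 1 N"
    using assms(2) by (rule gauss_binom_mult_euler_prod)
  also have "fps_eq_upto M \<dots> (1 * P)"
    unfolding P_def using assms by (simp add: euler_prod_eq_upto)
  finally have "fps_eq_upto M ((gauss_binom Y N m * P) * P) (1 * P)" .
  moreover have "P $ 0 \<noteq> 0"
    using euler_prod_nth_0[OF assms(1)] by (simp add: P_def)
  ultimately show ?thesis
    unfolding P_def by (rule fps_eq_upto_cancel)
qed

lemma choose2_gt:
  assumes "int M + 2 \<le> x \<or> x \<le> - int M - 2"
  shows "M < choose2 x"
proof -
  have "2 * int M + 2 \<le> x * (x - 1)"
    using assms
  proof
    assume "int M + 2 \<le> x"
    then have "2 * (x - 1) \<le> x * (x - 1)"
      by (intro mult_right_mono) auto
    with \<open>int M + 2 \<le> x\<close> show ?thesis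
      by (simp add: algebra_simps)
  next
    assume "x \<le> - int M - 2"
    then have "(- x) * 2 \<le> (- x) * (1 - x)"
      by (intro mult_left_mono) auto
    with \<open>x \<le> - int M - 2\<close> show ?thesis
      by (simp add: algebra_simps)
  qed
  then show ?thesis
    using of_nat_choose2[of x] by linarith
qed

definition theta_sum :: "'a::comm_ring_1 \<Rightarrow> nat \<Rightarrow> 'a" where
  "theta_sum Y L = (\<Sum>m=0..2 * L. Y ^ choose2 (int m - int L))"

lemma prod_lessThan_one_plus_power:
  fixes Y :: "'a::comm_ring_1"
  shows "(\<Prod>j<Suc n. 1 + Y ^ j) = 2 * (\<Prod>j\<in>{1..n}. 1 + Y ^ j)"
proof (induction n)
  case (Suc n)
  then show ?case
    by (simp add: prod.nat_ivl_Suc' mult.assoc)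
qed (simp add: one_add_one)

lemma jacobi_term_eq_upto:
  fixes Y :: "'a::field fps"
  assumes "Y $ 0 = 0" "L = 2 * M + 2" "m \<le> 2 * L"
  shows "fps_eq_upto M (gauss_binom Y (2 * L) m * Y ^ choose2 (int m - int L) * euler_prod Y 1 M)
           (Y ^ choose2 (int m - int L))"
proof (cases "M \<le> m \<and> M \<le> 2 * L - m")
  case True
  then have "fps_eq_upto M (gauss_binom Y (2 * L) m * euler_prod Y 1 M * Y ^ choose2 (int m - int L))
               (1 * Y ^ choose2 (int m - int L))"
    using assms by (intro fps_eq_upto_mult gauss_binom_eq_upto_1 fps_eq_upto_refl) auto
  then show ?thesis
    by (simp add: mult_ac)
next
  case False
  then have "M < choose2 (int m - int L)"
    using assms by (intro choose2_gt) auto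
  then have small: "fps_eq_upto M (Y ^ choose2 (int m - int L)) 0"
    by (intro fps_eq_upto_power_0 assms(1))
  then have "fps_eq_upto M (gauss_binom Y (2 * L) m * Y ^ choose2 (int m - int L) * euler_prod Y 1 M)
               (gauss_binom Y (2 * L) m * 0 * euler_prod Y 1 M)"
    by (intro fps_eq_upto_mult fps_eq_upto_refl)
  then show ?thesis
    using fps_eq_upto_sym[OF small] by (simp add: fps_eq_upto_trans)
qed

(* Take a = b = L in the finite identity: near the middle the Gaussian binomials times
   euler_prod Y 1 M are 1 up to order M, and all other terms have exponent above M. *)
lemma theta_sum_eq_upto:
  fixes Y :: "'a::field fps"
  assumes "Y $ 0 = 0"
  shows "fps_eq_upto M (2 * (\<Prod>j\<in>{1..M}. 1 + Y ^ j) ^ 2 * euler_prod Y 1 M)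
           (theta_sum Y (2 * M + 2))"
proof -
  define L where "L = Suc (2 * M + 1)"
  define R where "R = (\<Prod>j\<in>{1..M}. 1 + Y ^ j)"
  define P where "P = euler_prod Y 1 M"
  have R_stable: "fps_eq_upto M (\<Prod>j\<in>{1..K}. 1 + Y ^ j) R" if "M \<le> K" for K
    unfolding R_def
  proof (rule fps_eq_upto_prod_stable[OF _ that])
    fix j assume "M < j"
    then have "fps_eq_upto M (1 + Y ^ j) (1 + 0)"
      by (intro fps_eq_upto_add fps_eq_upto_refl fps_eq_upto_power_0 assms)
    then show "fps_eq_upto M (1 + Y ^ j) 1"
      by simp
  qed
  have "fps_eq_upto M (2 * R ^ 2 * P) (R * (2 * R) * P)"
    by (simp add: power2_eq_square mult_ac)
  also have "fps_eq_upto M \<dots> ((\<Prod>j\<in>{1..L}. 1 + Y ^ j) * (2 * (\<Prod>j\<in>{1..2 * M + 1}. 1 + Y ^ j)) * P)"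
    by (intro fps_eq_upto_mult fps_eq_upto_refl fps_eq_upto_sym[OF R_stable]) (simp_all add: L_def)
  also have "\<dots> = jacobi_sum Y L L * P"
    unfolding L_def by (simp only: prod_lessThan_one_plus_power[symmetric] finite_jacobi_triple_product)
  also have "\<dots> = (\<Sum>m=0..2 * L. gauss_binom Y (2 * L) m * Y ^ choose2 (int m - int L) * P)"
    by (simp add: jacobi_sum_def sum_distrib_right mult_2)
  also have "fps_eq_upto M \<dots> (theta_sum Y L)"
    unfolding theta_sum_def P_def using assms
    by (intro fps_eq_upto_sum jacobi_term_eq_upto) (simp_all add: L_def)
  finally show ?thesis
    by (simp add: R_def P_def L_def)
qed

section \<open>The series \<open>\<psi>(-q)\<close>\<close>

lemma mult_pred_mod_3: "(x::int) * (x - 1) mod 3 \<noteq> 1"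
proof -
  have eq: "x * (x - 1) mod 3 = (x mod 3) * ((x mod 3 - 1) mod 3) mod 3"
    by (simp only: mod_mult_eq mod_diff_left_eq)
  consider "x mod 3 = 0" | "x mod 3 = 1" | "x mod 3 = 2"
    by linarith
  then show ?thesis
    by cases (simp_all add: eq)
qed

lemma choose2_mod_3: "choose2 x mod 3 \<noteq> 2"
proof -
  have "2 * int (choose2 x) mod 3 \<noteq> 1"
    using mult_pred_mod_3[of x] by (simp add: of_nat_choose2)
  then show ?thesis
    by presburger
qed

lemma fps_minus_X_power_nth:
  "((- fps_X :: 'a::comm_ring_1 fps) ^ n) $ k = (if k = n then (- 1) ^ n else 0)"
proof -
  have "(- fps_X :: 'a fps) ^ n = fps_const ((- 1) ^ n) * fps_X ^ n"
    by (induction n) (simp_all add: mult_ac fps_const_neg[symmetric] del: fps_const_neg)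
  then show ?thesis
    by simp
qed

lemma theta_sum_minus_X_nth:
  assumes "k mod 3 = 2"
  shows "theta_sum (- fps_X :: 'a::comm_ring_1 fps) L $ k = 0"
  unfolding theta_sum_def fps_sum_nth
proof (intro sum.neutral ballI)
  fix m
  have "k \<noteq> choose2 (int m - int L)"
    using assms choose2_mod_3 by metis
  then show "((- fps_X :: 'a fps) ^ choose2 (int m - int L)) $ k = 0"
    by (simp only: fps_minus_X_power_nth if_False)
qed

(* Truncated form of f(-q) = f_2^3 / (f_1 f_4). *)
lemma euler_prod_parity:
  fixes Y :: "'a::comm_ring_1"
  shows "euler_prod (- Y) 1 (2 * K) * euler_prod Y 1 (2 * K) * euler_prod Y 4 K
           = euler_prod Y 2 (2 * K) * euler_prod Y 2 K ^ 2"
proof (induction K)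
  case (Suc K)
  define a where "a = Y ^ Suc (2 * K)"
  define b where "b = Y ^ Suc (Suc (2 * K))"
  have two_Suc: "2 * Suc K = Suc (Suc (2 * K))"
    by simp
  have minus_powers: "(- Y) ^ (Suc (2 * K) * 1) = - a" "(- Y) ^ (Suc (Suc (2 * K)) * 1) = b"
    by (simp_all add: a_def b_def power_minus_odd power_minus_even)
  have powers: "Y ^ (Suc (2 * K) * 1) = a" "Y ^ (Suc (Suc (2 * K)) * 1) = b"
    "Y ^ (Suc K * 4) = b ^ 2" "Y ^ (Suc (2 * K) * 2) = a ^ 2"
    "Y ^ (Suc (Suc (2 * K)) * 2) = b ^ 2" "Y ^ (Suc K * 2) = b"
    unfolding a_def b_def power_mult[symmetric] by (rule arg_cong[where f = "(^) Y"]; simp)+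
  define c where "c = (1 + a) * (1 - a) * (1 - b) ^ 2 * (1 - b ^ 2)"
  have "euler_prod (- Y) 1 (2 * Suc K) * euler_prod Y 1 (2 * Suc K) * euler_prod Y 4 (Suc K)
      = euler_prod (- Y) 1 (2 * K) * euler_prod Y 1 (2 * K) * euler_prod Y 4 K * c"
    unfolding two_Suc euler_prod_Suc minus_powers powers c_def by (simp add: power2_eq_square mult_ac)
  also have "\<dots> = euler_prod Y 2 (2 * K) * euler_prod Y 2 K ^ 2 * c"
    by (simp only: Suc.IH)
  also have "\<dots> = euler_prod Y 2 (2 * Suc K) * euler_prod Y 2 (Suc K) ^ 2"
    unfolding two_Suc euler_prod_Suc powers c_def by (simp add: power2_eq_square algebra_simps)
  finally show ?case .
qed simp

lemma prod_one_plus_minus_mult_euler_prod: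
  fixes Y :: "'a::comm_ring_1"
  shows "(\<Prod>j\<in>{1..M}. 1 + (- Y) ^ j) * euler_prod (- Y) 1 M = euler_prod Y 2 M"
proof -
  have "(1 + (- Y) ^ j) * (1 - (- Y) ^ (j * 1)) = 1 - Y ^ (j * 2)" for j
  proof -
    have "(- Y) ^ j * (- Y) ^ j = Y ^ (j * 2)"
      by (simp flip: power_mult_distrib add: power_mult power2_eq_square mult.commute)
    then show ?thesis
      by (simp add: algebra_simps)
  qed
  then show ?thesis
    by (simp add: euler_prod_def prod.distrib[symmetric])
qed

lemma euler_prod_psi_eq_upto:
  fixes Y :: "'a::field fps"
  assumes "Y $ 0 = 0"
  shows "fps_eq_upto M (euler_prod Y 1 M * euler_prod Y 4 M * inverse (euler_prod Y 2 M))
           ((\<Prod>j\<in>{1..M}. 1 + (- Y) ^ j) ^ 2 * euler_prod (- Y) 1 M)"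
proof -
  define R where "R = (\<Prod>j\<in>{1..M}. 1 + (- Y) ^ j)"
  define P where "P = euler_prod (- Y) 1 M"
  define W where "W = euler_prod Y 1 M * euler_prod Y 4 M * inverse (euler_prod Y 2 M)"
  have Y0: "(- Y) $ 0 = 0"
    using assms by simp
  have E2: "euler_prod Y 2 M = R * P" "euler_prod Y 2 M $ 0 \<noteq> 0"
    using prod_one_plus_minus_mult_euler_prod[of Y M] euler_prod_nth_0[OF assms, of 2 M]
    by (simp_all add: R_def P_def)
  have "fps_eq_upto M (P * euler_prod Y 1 M * euler_prod Y 4 M)
          (euler_prod (- Y) 1 (2 * M) * euler_prod Y 1 (2 * M) * euler_prod Y 4 M)"
    unfolding P_def using assms Y0
    by (intro fps_eq_upto_mult fps_eq_upto_refl fps_eq_upto_sym[OF euler_prod_eq_upto]) simp_all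
  also have "\<dots> = euler_prod Y 2 (2 * M) * euler_prod Y 2 M ^ 2"
    by (rule euler_prod_parity)
  also have "fps_eq_upto M \<dots> (euler_prod Y 2 M * euler_prod Y 2 M ^ 2)"
    using assms by (intro fps_eq_upto_mult fps_eq_upto_refl euler_prod_eq_upto) simp_all
  finally have parity: "fps_eq_upto M (P * euler_prod Y 1 M * euler_prod Y 4 M * inverse (euler_prod Y 2 M))
      (euler_prod Y 2 M * euler_prod Y 2 M ^ 2 * inverse (euler_prod Y 2 M))"
    by (rule fps_eq_upto_mult[OF _ fps_eq_upto_refl])
  have "W * P = P * euler_prod Y 1 M * euler_prod Y 4 M * inverse (euler_prod Y 2 M)"
    by (simp only: W_def mult_ac)
  also note parity
  also have "euler_prod Y 2 M * euler_prod Y 2 M ^ 2 * inverse (euler_prod Y 2 M)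
      = euler_prod Y 2 M ^ 2 * (euler_prod Y 2 M * inverse (euler_prod Y 2 M))"
    by (simp only: mult_ac)
  also have "\<dots> = (R ^ 2 * P) * P"
    using E2 inverse_mult_eq_1'[OF E2(2)] by (simp add: power2_eq_square mult_ac)
  finally have "fps_eq_upto M (W * P) ((R ^ 2 * P) * P)" .
  moreover have "P $ 0 \<noteq> 0"
    using euler_prod_nth_0[OF Y0, of 1 M] by (simp add: P_def)
  ultimately show ?thesis
    unfolding W_def R_def P_def by (rule fps_eq_upto_cancel)
qed

(* Ramanujan's psi(-q), where psi(q) = f_2^2 / f_1 = sum_(n >= 0) q^(n(n+1)/2). *)
definition psi_minus :: "rat fps" where
  "psi_minus = euler_f 1 * euler_f 4 * inverse (euler_f 2)"

lemma int_coeffs_psi_minus: "int_coeffs psi_minus"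
  unfolding psi_minus_def
  by (intro int_coeffs_mult int_coeffs_inverse int_coeffs_euler_f) simp

lemma psi_minus_nth_eq_0:
  assumes "k mod 3 = 2"
  shows "psi_minus $ k = 0"
proof -
  define Y where "Y = (fps_X :: rat fps)"
  define R where "R = (\<Prod>j\<in>{1..k}. 1 + (- Y) ^ j)"
  define P where "P = euler_prod (- Y) 1 k"
  have "fps_eq_upto k psi_minus
          (euler_prod Y 1 k * euler_prod Y 4 k * inverse (euler_prod Y 2 k))"
    unfolding Y_def psi_minus_def by (intro fps_eq_upto_mult fps_eq_upto_inverse euler_f_eq_upto) simp_all
  also have "fps_eq_upto k \<dots> (R ^ 2 * P)"
    unfolding R_def P_def by (rule euler_prod_psi_eq_upto) (simp add: Y_def)
  finally have "fps_eq_upto k (2 * psi_minus) (2 * R ^ 2 * P)"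
    unfolding mult.assoc[of 2] by (rule fps_eq_upto_mult[OF fps_eq_upto_refl])
  also have "fps_eq_upto k \<dots> (theta_sum (- Y) (2 * k + 2))"
    unfolding R_def P_def by (rule theta_sum_eq_upto) (simp add: Y_def)
  finally have "2 * psi_minus $ k = theta_sum (- Y) (2 * k + 2) $ k"
    by (simp add: fps_eq_upto_def fps_numeral_fps_const)
  then show ?thesis
    using theta_sum_minus_X_nth[OF assms, where 'a = rat] by (simp add: Y_def)
qed

lemma fps_quotient_regroup:
  fixes a b c :: "'a::field fps"
  assumes "a $ 0 \<noteq> 0" "b $ 0 \<noteq> 0"
  shows "c ^ (3 * i + 1) * b ^ 3 * inverse (a ^ 2 * b ^ (2 * (3 * i + 2)))
           = (a * c * inverse b) * ((c ^ 3) ^ i * inverse (a ^ 3 * (b ^ 3) ^ (2 * i)))"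
proof -
  define u where "u = inverse a"
  define v where "v = inverse b"
  have au: "a * u = 1" and bv: "b * v = 1"
    using assms by (simp_all add: u_def v_def inverse_mult_eq_1')
  have "2 * (3 * i + 2) = 1 + 6 * i + 3"
    by simp
  then have "v ^ (2 * (3 * i + 2)) = v * v ^ (6 * i) * v ^ 3"
    by (simp only: power_add power_one_right)
  moreover have "u ^ 3 = u ^ 2 * u"
    by (simp add: power2_eq_square power3_eq_cube)
  ultimately have inv: "inverse (a ^ 2 * b ^ (2 * (3 * i + 2))) = u ^ 2 * (v * v ^ (6 * i) * v ^ 3)"
    "inverse (a ^ 3 * (b ^ 3) ^ (2 * i)) = u ^ 2 * u * v ^ (6 * i)"
    by (simp_all add: u_def v_def fps_inverse_mult fps_inverse_power flip: power_mult)
  have c: "c ^ (3 * i + 1) = c * (c ^ 3) ^ i"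
    by (simp add: power_mult[symmetric] mult.commute)
  define common where "common = c * (c ^ 3) ^ i * u ^ 2 * v * v ^ (6 * i)"
  have "c ^ (3 * i + 1) * b ^ 3 * inverse (a ^ 2 * b ^ (2 * (3 * i + 2))) = common * (b * v) ^ 3"
    unfolding inv c common_def by (simp add: power_mult_distrib mult_ac)
  also have "\<dots> = common * (a * u)"
    by (simp add: au bv)
  also have "\<dots> = (a * c * inverse b) * ((c ^ 3) ^ i * inverse (a ^ 3 * (b ^ 3) ^ (2 * i)))"
    unfolding inv common_def v_def[symmetric] by (simp add: mult_ac)
  finally show ?thesis .
qed

lemma overcubic_gf_eq_psi_minus_mult:
  "overcubic_gf (3 * i + 2)
     = psi_minus * ((euler_f 4 ^ 3) ^ i * inverse (euler_f 1 ^ 3 * (euler_f 2 ^ 3) ^ (2 * i)))"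
proof -
  have "3 * i + 2 - 1 = 3 * i + 1"
    by simp
  then show ?thesis
    unfolding overcubic_gf_def psi_minus_def by (simp only:) (rule fps_quotient_regroup; simp)
qed

lemma overcubic_cofactor_cong:
  "fps_cong 3 ((euler_f 4 ^ 3) ^ i * inverse (euler_f 1 ^ 3 * (euler_f 2 ^ 3) ^ (2 * i)))
     (euler_f (3 * 4) ^ i * inverse (euler_f (3 * 1) * euler_f (3 * 2) ^ (2 * i)))"
  by (intro fps_cong_mult fps_cong_power fps_cong_inverse euler_f_cube_cong int_coeffs_mult
      int_coeffs_power int_coeffs_inverse int_coeffs_euler_f) (simp_all add: fps_power_zeroth)

lemma overcubic_cofactor_support:
  "fps_support_dvd 3 (euler_f (3 * 4) ^ i * inverse (euler_f (3 * 1) * euler_f (3 * 2) ^ (2 * i)))"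
  by (intro fps_support_dvd_mult fps_support_dvd_power fps_support_dvd_inverse
      fps_support_dvd_euler_f) (simp_all add: fps_power_zeroth)

theorem mainTheorem3:
  fixes n i :: nat
  assumes "i \<ge> 1"
  shows "\<exists>k::int. abar (3 * i + 2) (3 * n + 2) = of_int (3 * k)"
proof -
  define G where "G = (euler_f 4 ^ 3) ^ i * inverse (euler_f 1 ^ 3 * (euler_f 2 ^ 3) ^ (2 * i))"
  define G' where "G' = euler_f (3 * 4) ^ i * inverse (euler_f (3 * 1) * euler_f (3 * 2) ^ (2 * i))"
  have "overcubic_gf (3 * i + 2) = psi_minus * G"
    unfolding G_def by (rule overcubic_gf_eq_psi_minus_mult)
  moreover have "fps_cong 3 (psi_minus * G) (psi_minus * G')"
    unfolding G_def G'_def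
    by (rule fps_cong_mult_integral(2)[OF overcubic_cofactor_cong int_coeffs_psi_minus])
  moreover have "(psi_minus * G') $ (3 * n + 2) = 0"
  proof (rule fps_mult_nth_eq_0_mod[where r = 2])
    show "psi_minus $ k = 0" if "k mod 3 = 2" for k
      using that by (rule psi_minus_nth_eq_0)
    show "fps_support_dvd 3 G'"
      unfolding G'_def by (rule overcubic_cofactor_support)
    show "(3 * n + 2) mod 3 = 2"
      by presburger
  qed
  ultimately have "int_multiple 3 (abar (3 * i + 2) (3 * n + 2))"
    unfolding abar_def fps_cong_def by (metis diff_zero)
  then show ?thesis
    by (simp add: int_multiple_def)
qed

end
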